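(* Consider an attack graph $G=(V,\mathcal{E})$ with source $v_s$ and a single non-behavioral defender with budget $B\ge0$, whose feasible investments are $X=\{x\in\mathbb{R}^{|\mathcal{E}|}_{\ge 0}:\mathbf{1}^Tx\le B\}$. Let the attack success probability on each edge be $p_{i,j}(x_{i,j})=e^{-x_{i,j}}$. Suppose there is a single target asset $v_t$ (reachable from $v_s$) with loss $L_t\ge0$, all other assets having loss $0$, so that the defender's (true) expected cost is $$\hat C(x)=L_t\max_{P\in\mathcal{P}_t}\prod_{(v_i,v_j)\in P}e^{-x_{i,j}}.$$ Let $\mathcal{E}_c\subseteq\mathcal{E}$ be a min-cut between $v_s$ and $v_t$, with $N=|\mathcal{E}_c|$. Then the investment that places $B/N$ on each edge of $\mathcal{E}_c$ and $0$ on every other edge minimizes $\hat C$ over $X$; i.e., it is optimal for the defender to distribute all of her budget equally only on the edges of $\mathcal{E}_c$.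
   Context: An attack graph is a finite directed graph with a designated source node $v_s$. $\mathcal{P}_t$ is the set of directed paths from $v_s$ to $v_t$ (viewed as sets of edges). An edge-cut between $v_s$ and $v_t$ is a set of edges whose removal destroys all directed paths from $v_s$ to $v_t$; a min-cut is an edge-cut of minimum cardinality. *)

theory Defs
  imports Complex_Main
begin

definition is_dpath :: "('v \<times> 'v) set \<Rightarrow> 'v \<Rightarrow> 'v \<Rightarrow> 'v list \<Rightarrow> bool" where
  "is_dpath E s t vs \<longleftrightarrow> vs \<noteq> [] \<and> hd vs = s \<and> last vs = t \<and> distinct vs
     \<and> set (zip vs (tl vs)) \<subseteq> E"

definition path_edges :: "'v list \<Rightarrow> ('v \<times> 'v) set" where
  "path_edges vs = set (zip vs (tl vs))"

definition paths :: "('v \<times> 'v) set \<Rightarrow> 'v \<Rightarrow> 'v \<Rightarrow> ('v \<times> 'v) set set" where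
  "paths E s t = path_edges ` {vs. is_dpath E s t vs}"

definition is_edge_cut :: "('v \<times> 'v) set \<Rightarrow> 'v \<Rightarrow> 'v \<Rightarrow> ('v \<times> 'v) set \<Rightarrow> bool" where
  "is_edge_cut E s t C \<longleftrightarrow> C \<subseteq> E \<and> (\<forall>P \<in> paths E s t. P \<inter> C \<noteq> {})"

definition is_min_cut :: "('v \<times> 'v) set \<Rightarrow> 'v \<Rightarrow> 'v \<Rightarrow> ('v \<times> 'v) set \<Rightarrow> bool" where
  "is_min_cut E s t C \<longleftrightarrow> is_edge_cut E s t C \<and>
     (\<forall>C'. is_edge_cut E s t C' \<longrightarrow> card C \<le> card C')"

text \<open>Feasible investments: nonnegative on every edge, total at most B
  (values off E are irrelevant).\<close>
definition feasible :: "('v \<times> 'v) set \<Rightarrow> real \<Rightarrow> (('v \<times> 'v) \<Rightarrow> real) \<Rightarrow> bool" where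
  "feasible E B x \<longleftrightarrow> (\<forall>e\<in>E. 0 \<le> x e) \<and> (\<Sum>e\<in>E. x e) \<le> B"

definition true_cost :: "('v \<times> 'v) set \<Rightarrow> 'v \<Rightarrow> 'v \<Rightarrow> real \<Rightarrow> (('v \<times> 'v) \<Rightarrow> real) \<Rightarrow> real" where
  "true_cost E s t L x = L * Max ((\<lambda>P. \<Prod>e\<in>P. exp (- x e)) ` paths E s t)"

end

(* With success probabilities e^-x the cost of an investment x is L e^-d(x), where d(x) is
   the x-length of a shortest s-t path, so the defender maximises d over the budget simplex.
   Spreading B uniformly over a min-cut of size N gives d >= B/N, as every path meets
   the cut. Conversely N d(x) <= sum of x for every nonnegative x, by induction on the support
   of x: the set R of vertices reachable from s along weight-zero edges misses t, so the edges
   leaving R form a cut of at least N edges, all of positive weight. Lowering these by their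
   least weight m lowers the total by at least N m but every path length by at most m, since
   a path can be rerouted to reach its last vertex in R along zero edges, after which it
   leaves R only once. *)

theory Submission
  imports Defs
begin

lemma path_edges_Cons_Cons [simp]:
  "path_edges (a # b # vs) = insert (a, b) (path_edges (b # vs))"
  by (simp add: path_edges_def)

lemma path_edges_Nil [simp]: "path_edges [] = {}"
  and path_edges_singleton [simp]: "path_edges [a] = {}"
  by (simp_all add: path_edges_def)

lemma path_edges_Cons_subset: "path_edges vs \<subseteq> path_edges (a # vs)"
  by (cases vs) auto

lemma path_edges_append_left: "path_edges xs \<subseteq> path_edges (xs @ ys)"
  by (induction xs rule: induct_list012) auto

lemma path_edges_append_right: "path_edges ys \<subseteq> path_edges (xs @ ys)"
  by (induction xs) (auto dest: path_edges_Cons_subset[THEN subsetD])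

lemma path_edges_snoc:
  "vs \<noteq> [] \<Longrightarrow> path_edges (vs @ [w]) = insert (last vs, w) (path_edges vs)"
  by (induction vs rule: induct_list012) auto

lemma fst_mem_of_path_edges: "(a, b) \<in> path_edges vs \<Longrightarrow> a \<in> set vs"
  unfolding path_edges_def by (auto dest: set_zip_leftD)

lemma path_edges_from_distinct_hd:
  assumes "distinct (w # vs)" and "(w, b) \<in> path_edges (w # vs)"
  shows "b = hd vs"
  using assms by (cases vs) (auto dest: fst_mem_of_path_edges)

lemma rtrancl_path_edges: "vs \<noteq> [] \<Longrightarrow> (hd vs, last vs) \<in> (path_edges vs)\<^sup>*"
proof (induction vs rule: induct_list012)
  case (3 a b vs)
  have "(b, last (b # vs)) \<in> (path_edges (b # vs))\<^sup>*"
    using "3.IH"(2) by simp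
  also have "(path_edges (b # vs))\<^sup>* \<subseteq> (path_edges (a # b # vs))\<^sup>*"
    by (rule rtrancl_mono) auto
  finally show ?case
    by (auto intro: converse_rtrancl_into_rtrancl)
qed simp_all

lemma path_edges_exit_edge:
  assumes "vs \<noteq> []" and "hd vs \<in> R" and "last vs \<notin> R"
  shows "\<exists>u v. (u, v) \<in> path_edges vs \<and> u \<in> R \<and> v \<notin> R"
  using assms
proof (induction vs rule: induct_list012)
  case (3 a b vs)
  then show ?case
    by (cases "b \<in> R") auto
qed simp_all

lemma is_dpath_mono: "is_dpath F a b vs \<Longrightarrow> F \<subseteq> G \<Longrightarrow> is_dpath G a b vs"
  unfolding is_dpath_def by blast

lemma rtrancl_imp_is_dpath:
  assumes "(a, b) \<in> F\<^sup>*"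
  shows "\<exists>vs. is_dpath F a b vs"
  using assms
proof (induction rule: rtrancl_induct)
  case base
  have "is_dpath F a a [a]" by (simp add: is_dpath_def)
  then show ?case ..
next
  case (step u w)
  then obtain vs where vs: "is_dpath F a u vs" by blast
  show ?case
  proof (cases "w \<in> set vs")
    case True
    then obtain ys zs where vs_split: "vs = ys @ w # zs"
      by (meson split_list)
    have "path_edges (ys @ [w]) \<subseteq> path_edges vs"
      using path_edges_append_left[of "ys @ [w]" zs] vs_split by simp
    then have "is_dpath F a w (ys @ [w])"
      using vs vs_split unfolding is_dpath_def path_edges_def by (cases ys) auto
    then show ?thesis ..
  next
    case False
    then have "is_dpath F a w (vs @ [w])"
      using vs step(2) path_edges_snoc[of vs w] unfolding is_dpath_def path_edges_def
      by (auto simp: hd_append)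
    then show ?thesis ..
  qed
qed

lemma path_in_paths:
  "is_dpath E s t vs \<Longrightarrow> path_edges vs \<in> paths E s t"
  unfolding paths_def by blast

lemma paths_subset_edges: "P \<in> paths E s t \<Longrightarrow> P \<subseteq> E"
  unfolding paths_def is_dpath_def path_edges_def by auto

lemma finite_path: "P \<in> paths E s t \<Longrightarrow> finite P"
  unfolding paths_def path_edges_def by auto

lemma finite_paths: "finite E \<Longrightarrow> finite (paths E s t)"
  by (rule finite_subset[of _ "Pow E"]) (auto dest: paths_subset_edges)

lemma rtrancl_imp_path_within:
  assumes "(s, t) \<in> F\<^sup>*" and "F \<subseteq> E"
  obtains Q where "Q \<in> paths E s t" and "Q \<subseteq> F"
proof -
  obtain vs where vs: "is_dpath F s t vs"
    using rtrancl_imp_is_dpath[OF assms(1)] ..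
  show thesis
  proof
    show "path_edges vs \<in> paths E s t"
      using is_dpath_mono[OF vs assms(2)] by (rule path_in_paths)
    show "path_edges vs \<subseteq> F"
      using vs by (simp add: is_dpath_def path_edges_def)
  qed
qed

definition out_edges :: "('v \<times> 'v) set \<Rightarrow> 'v set \<Rightarrow> ('v \<times> 'v) set" where
  "out_edges E R = {(u, v) \<in> E. u \<in> R \<and> v \<notin> R}"

lemma out_edges_is_edge_cut:
  assumes "s \<in> R" and "t \<notin> R"
  shows "is_edge_cut E s t (out_edges E R)"
  unfolding is_edge_cut_def
proof (intro conjI ballI)
  show "out_edges E R \<subseteq> E"
    by (auto simp: out_edges_def)
next
  fix P assume "P \<in> paths E s t"
  then obtain vs where vs: "is_dpath E s t vs" and P: "P = path_edges vs"
    unfolding paths_def by blast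
  then obtain u v where uv: "(u, v) \<in> P" "u \<in> R" "v \<notin> R"
    using path_edges_exit_edge[of vs R] assms unfolding is_dpath_def by auto
  moreover have "P \<subseteq> E"
    using vs P unfolding is_dpath_def path_edges_def by simp
  ultimately show "P \<inter> out_edges E R \<noteq> {}"
    by (auto simp: out_edges_def)
qed

lemma path_reroute_via_reachable:
  assumes P: "P \<in> paths E s t" and "Z \<subseteq> E"
    and R_def: "R = {v. (s, v) \<in> Z\<^sup>*}" and "t \<notin> R"
  obtains Q W where "Q \<in> paths E s t" and "W \<subseteq> P" and "Q \<subseteq> Z \<union> W"
    and "card (W \<inter> out_edges E R) \<le> 1"
proof -
  obtain vs where vs: "is_dpath E s t vs" and P_vs: "P = path_edges vs"
    using P unfolding paths_def by blast
  have "s \<in> set vs \<and> s \<in> R"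
    using vs R_def unfolding is_dpath_def by auto
  then obtain ys w r where vs_split: "vs = ys @ w # r" and "w \<in> R"
    and r_out: "\<forall>v \<in> set r. v \<notin> R"
    using split_list_last_prop[of vs "\<lambda>v. v \<in> R"] by blast
  define W where "W = path_edges (w # r)"
  have "W \<subseteq> P"
    unfolding W_def P_vs vs_split by (rule path_edges_append_right)
  have "W \<subseteq> E"
    using \<open>W \<subseteq> P\<close> vs P_vs unfolding is_dpath_def path_edges_def by auto
  have "(s, w) \<in> (Z \<union> W)\<^sup>*"
    using \<open>w \<in> R\<close> R_def rtrancl_mono[of Z "Z \<union> W"] by auto
  moreover have "(w, t) \<in> (Z \<union> W)\<^sup>*"
    using rtrancl_path_edges[of "w # r"] vs vs_split rtrancl_mono[of W "Z \<union> W"]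
    unfolding W_def is_dpath_def by auto
  ultimately have "(s, t) \<in> (Z \<union> W)\<^sup>*"
    by (rule rtrancl_trans)
  moreover have "Z \<union> W \<subseteq> E"
    using \<open>Z \<subseteq> E\<close> \<open>W \<subseteq> E\<close> by blast
  ultimately obtain Q where "Q \<in> paths E s t" and "Q \<subseteq> Z \<union> W"
    by (rule rtrancl_imp_path_within)
  moreover have "W \<inter> out_edges E R \<subseteq> {(w, hd r)}"
  proof
    fix e assume e: "e \<in> W \<inter> out_edges E R"
    then obtain a b where ab: "e = (a, b)" "a \<in> R" "(a, b) \<in> W"
      by (auto simp: out_edges_def)
    have "a \<in> set (w # r)"
      using ab(3) unfolding W_def by (rule fst_mem_of_path_edges)
    with r_out ab(2) have "a = w"
      by auto
    moreover have "distinct (w # r)"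
      using vs vs_split unfolding is_dpath_def by simp
    ultimately have "b = hd r"
      using ab(3) path_edges_from_distinct_hd[of w r b] unfolding W_def by simp
    then show "e \<in> {(w, hd r)}"
      using ab(1) \<open>a = w\<close> by simp
  qed
  then have "card (W \<inter> out_edges E R) \<le> card {(w, hd r)}"
    by (rule card_mono[rotated]) simp
  then have "card (W \<inter> out_edges E R) \<le> 1"
    by simp
  ultimately show thesis
    using that \<open>W \<subseteq> P\<close> by blast
qed

lemma sum_lowered_on:
  fixes f :: "'a \<Rightarrow> real"
  assumes "finite A"
  shows "(\<Sum>e\<in>A. if e \<in> C then f e - m else f e) = sum f A - m * real (card (A \<inter> C))"
proof -
  have "(\<Sum>e\<in>A. if e \<in> C then f e - m else f e) = (\<Sum>e\<in>A. f e - (if e \<in> C then m else 0))"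
    by (rule sum.cong) auto
  also have "\<dots> = sum f A - m * real (card (A \<inter> C))"
    using assms by (simp add: sum_subtractf sum.If_cases Int_def)
  finally show ?thesis .
qed

definition zero_reachable :: "('v \<times> 'v) set \<Rightarrow> (('v \<times> 'v) \<Rightarrow> real) \<Rightarrow> 'v \<Rightarrow> 'v set" where
  "zero_reachable E x s = {v. (s, v) \<in> {e \<in> E. x e = 0}\<^sup>*}"

lemma target_not_zero_reachable:
  assumes "\<forall>P \<in> paths E s t. D \<le> sum x P" and "0 < D"
  shows "t \<notin> zero_reachable E x s"
proof
  assume "t \<in> zero_reachable E x s"
  then obtain Q where "Q \<in> paths E s t" and "Q \<subseteq> {e \<in> E. x e = 0}"
    unfolding zero_reachable_def by (auto elim: rtrancl_imp_path_within)
  moreover from \<open>Q \<subseteq> {e \<in> E. x e = 0}\<close> have "sum x Q = 0"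
    by (intro sum.neutral) auto
  ultimately show False
    using assms by fastforce
qed

lemma out_edges_zero_reachable_pos:
  assumes "\<forall>e \<in> E. 0 \<le> x e" and "e \<in> out_edges E (zero_reachable E x s)"
  shows "0 < x e"
proof (rule ccontr)
  assume "\<not> 0 < x e"
  with assms obtain u v where "e = (u, v)" "e \<in> E" "x e = 0"
    "u \<in> zero_reachable E x s" "v \<notin> zero_reachable E x s"
    by (force simp: out_edges_def)
  then show False
    unfolding zero_reachable_def by (auto intro: rtrancl_into_rtrancl)
qed

lemma path_weight_lowered_on_out_edges:
  fixes x :: "('v \<times> 'v) \<Rightarrow> real"
  assumes nonneg: "\<forall>e \<in> E. 0 \<le> x e" and weight: "\<forall>P \<in> paths E s t. D \<le> sum x P"
    and R_def: "R = zero_reachable E x s" and "t \<notin> R"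
    and m_le: "\<forall>e \<in> out_edges E R. m \<le> x e" and "0 \<le> m"
    and P: "P \<in> paths E s t"
  shows "D - m \<le> (\<Sum>e\<in>P. if e \<in> out_edges E R then x e - m else x e)"
proof -
  define Z where "Z = {e \<in> E. x e = 0}"
  obtain Q W where Q: "Q \<in> paths E s t" and "W \<subseteq> P" and "Q \<subseteq> Z \<union> W"
    and W_cut: "card (W \<inter> out_edges E R) \<le> 1"
    using path_reroute_via_reachable[OF P, of Z R] \<open>t \<notin> R\<close>
    unfolding R_def Z_def zero_reachable_def by blast
  have "P \<subseteq> E" and "finite P"
    using paths_subset_edges[OF P] finite_path[OF P] .
  then have "W \<subseteq> E" and "finite W"
    using \<open>W \<subseteq> P\<close> by (auto intro: finite_subset)
  have "D \<le> sum x Q"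
    using weight Q by blast
  also have "\<dots> = sum x (Q \<inter> W) + sum x (Q - W)"
    using finite_path[OF Q] by (rule sum.Int_Diff)
  also have "sum x (Q - W) = 0"
    using \<open>Q \<subseteq> Z \<union> W\<close> unfolding Z_def by (intro sum.neutral) auto
  also have "sum x (Q \<inter> W) \<le> sum x W"
    using \<open>finite W\<close> \<open>W \<subseteq> E\<close> nonneg by (intro sum_mono2) auto
  also have "sum x W = (\<Sum>e\<in>W. if e \<in> out_edges E R then x e - m else x e)
      + m * real (card (W \<inter> out_edges E R))"
    using sum_lowered_on[OF \<open>finite W\<close>] by simp
  also have "m * real (card (W \<inter> out_edges E R)) \<le> m"
    using mult_left_mono[of "real (card (W \<inter> out_edges E R))" 1 m] W_cut \<open>0 \<le> m\<close> by simp
  also have "(\<Sum>e\<in>W. if e \<in> out_edges E R then x e - m else x e)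
      \<le> (\<Sum>e\<in>P. if e \<in> out_edges E R then x e - m else x e)"
    using \<open>finite P\<close> \<open>W \<subseteq> P\<close> \<open>P \<subseteq> E\<close> nonneg m_le by (intro sum_mono2) auto
  finally show ?thesis
    by simp
qed

lemma min_cut_mult_path_weight_le_total:
  fixes x :: "('v \<times> 'v) \<Rightarrow> real"
  assumes fin: "finite E" and "\<forall>e \<in> E. 0 \<le> x e" and "\<forall>P \<in> paths E s t. D \<le> sum x P"
    and cuts: "\<forall>C. is_edge_cut E s t C \<longrightarrow> N \<le> card C"
  shows "real N * D \<le> sum x E"
  using assms(2,3)
proof (induction "card {e \<in> E. 0 < x e}" arbitrary: x D rule: less_induct)
  case less
  then have nonneg: "\<forall>e \<in> E. 0 \<le> x e" and weight: "\<forall>P \<in> paths E s t. D \<le> sum x P"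
    by auto
  show ?case
  proof (cases "0 < D")
    case False
    then show ?thesis
      using nonneg by (simp add: mult_nonneg_nonpos sum_nonneg order_trans[of _ 0])
  next
    case True
    define R where "R = zero_reachable E x s"
    define C where "C = out_edges E R"
    have "C \<subseteq> E" and "finite C"
      using fin by (auto simp: C_def out_edges_def intro: finite_subset)
    have "t \<notin> R"
      unfolding R_def using weight True by (rule target_not_zero_reachable)
    then have "N \<le> card C"
      using cuts out_edges_is_edge_cut[of s R t E] by (simp add: C_def R_def zero_reachable_def)
    have C_pos: "\<forall>e \<in> C. 0 < x e"
      using out_edges_zero_reachable_pos[OF nonneg] unfolding C_def R_def by simp
    show ?thesis
    proof (cases "C = {}")
      case True
      then show ?thesis
        using \<open>N \<le> card C\<close> nonneg by (simp add: sum_nonneg)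
    next
      case False
      define m where "m = Min (x ` C)"
      have m_le: "\<forall>e \<in> C. m \<le> x e"
        unfolding m_def using \<open>finite C\<close> by simp
      have "m \<in> x ` C"
        unfolding m_def using \<open>finite C\<close> \<open>C \<noteq> {}\<close> by (intro Min_in) auto
      then obtain e0 where "e0 \<in> C" and "x e0 = m"
        by blast
      then have "0 < m"
        using C_pos by auto
      define x' where "x' = (\<lambda>e. if e \<in> C then x e - m else x e)"
      have "real N * m \<le> real (card C) * m"
        using \<open>N \<le> card C\<close> \<open>0 < m\<close> by simp
      show ?thesis
      proof (cases "D \<le> m")
        case True
        have "real N * D \<le> real (card C) * D"
          using \<open>N \<le> card C\<close> \<open>0 < D\<close> by simp
        also have "\<dots> \<le> sum x C"
          using m_le True by (intro sum_bounded_below) auto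
        also have "\<dots> \<le> sum x E"
          using \<open>C \<subseteq> E\<close> fin nonneg by (intro sum_mono2) auto
        finally show ?thesis .
      next
        case False
        have "{e \<in> E. 0 < x' e} \<subset> {e \<in> E. 0 < x e}"
          using \<open>0 < m\<close> \<open>e0 \<in> C\<close> \<open>x e0 = m\<close> \<open>C \<subseteq> E\<close> unfolding x'_def by auto
        then have "card {e \<in> E. 0 < x' e} < card {e \<in> E. 0 < x e}"
          using fin by (intro psubset_card_mono) auto
        moreover have "\<forall>e \<in> E. 0 \<le> x' e"
          using nonneg m_le unfolding x'_def by auto
        moreover have "\<forall>P \<in> paths E s t. D - m \<le> sum x' P"
          using path_weight_lowered_on_out_edges[OF nonneg weight R_def \<open>t \<notin> R\<close>]
            m_le \<open>0 < m\<close> unfolding x'_def C_def by auto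
        ultimately have "real N * (D - m) \<le> sum x' E"
          using less.hyps by blast
        moreover have "sum x' E = sum x E - m * real (card C)"
          unfolding x'_def using sum_lowered_on[OF fin] \<open>C \<subseteq> E\<close> by (simp add: Int_absorb1)
        ultimately show ?thesis
          using \<open>real N * m \<le> real (card C) * m\<close> by (simp add: algebra_simps)
      qed
    qed
  qed
qed

lemma Max_exp_neg_image:
  fixes f :: "'a \<Rightarrow> real"
  assumes "finite A" and "A \<noteq> {}"
  shows "Max ((\<lambda>a. exp (- f a)) ` A) = exp (- Min (f ` A))"
proof (rule Max_eqI)
  show "finite ((\<lambda>a. exp (- f a)) ` A)"
    using assms by simp
  show "y \<le> exp (- Min (f ` A))" if "y \<in> (\<lambda>a. exp (- f a)) ` A" for y
    using that assms by auto
  have "Min (f ` A) \<in> f ` A"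
    using assms by (intro Min_in) auto
  then show "exp (- Min (f ` A)) \<in> (\<lambda>a. exp (- f a)) ` A"
    by auto
qed

lemma true_cost_eq_exp_min_path_weight:
  assumes "finite E" and "paths E s t \<noteq> {}"
  shows "true_cost E s t L x = L * exp (- Min (sum x ` paths E s t))"
proof -
  have "(\<lambda>P. \<Prod>e\<in>P. exp (- x e)) ` paths E s t = (\<lambda>P. exp (- sum x P)) ` paths E s t"
    by (intro image_cong refl) (simp add: exp_sum[symmetric] finite_path sum_negf)
  then show ?thesis
    unfolding true_cost_def
    using Max_exp_neg_image[OF finite_paths[OF assms(1)] assms(2)] by simp
qed

lemma edge_cut_uniform_path_weight:
  fixes c :: real
  assumes "is_edge_cut E s t C" and "0 \<le> c" and P: "P \<in> paths E s t"
  shows "c \<le> (\<Sum>e\<in>P. if e \<in> C then c else 0)"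
proof -
  have "P \<inter> C \<noteq> {}"
    using assms unfolding is_edge_cut_def by blast
  then have "1 \<le> card (P \<inter> C)"
    using finite_path[OF P] by (simp add: Suc_le_eq card_gt_0_iff)
  then have "c \<le> c * real (card (P \<inter> C))"
    using \<open>0 \<le> c\<close> mult_left_mono[of 1 "real (card (P \<inter> C))" c] by simp
  also have "\<dots> = (\<Sum>e\<in>P. if e \<in> C then c else 0)"
    using finite_path[OF P] by (simp add: sum.If_cases Int_def)
  finally show ?thesis .
qed

lemma feasible_min_path_weight_bound:
  assumes "finite E" and "paths E s t \<noteq> {}" and "is_min_cut E s t C" and "feasible E B x"
  shows "real (card C) * Min (sum x ` paths E s t) \<le> B"
proof -
  have "\<forall>P \<in> paths E s t. Min (sum x ` paths E s t) \<le> sum x P"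
    using finite_paths[OF assms(1)] by simp
  then have "real (card C) * Min (sum x ` paths E s t) \<le> sum x E"
    using min_cut_mult_path_weight_le_total[OF assms(1)] assms(3,4)
    unfolding is_min_cut_def feasible_def by blast
  then show ?thesis
    using assms(4) unfolding feasible_def by linarith
qed

theorem proposition2:
  fixes E :: "('v \<times> 'v) set" and s t :: 'v and B L :: real and Ec :: "('v \<times> 'v) set"
  assumes "finite E"
    and "0 \<le> B" and "0 \<le> L"
    and "paths E s t \<noteq> {}"
    and "is_min_cut E s t Ec"
  defines "xstar \<equiv> (\<lambda>e. if e \<in> Ec then B / real (card Ec) else 0)"
  shows "feasible E B xstar \<and>
         (\<forall>x. feasible E B x \<longrightarrow> true_cost E s t L xstar \<le> true_cost E s t L x)"
proof -
  let ?N = "real (card Ec)" and ?w = "\<lambda>x. Min (sum x ` paths E s t)"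
  have cut: "is_edge_cut E s t Ec"
    using assms(5) unfolding is_min_cut_def by blast
  then have "Ec \<subseteq> E" and "Ec \<noteq> {}"
    using assms(4) unfolding is_edge_cut_def by auto
  then have "0 < ?N"
    using finite_subset[OF _ assms(1)] by (simp add: card_gt_0_iff)
  have "sum xstar E = ?N * (B / ?N)"
    using sum.inter_restrict[OF assms(1), of "\<lambda>_. B / ?N" Ec] \<open>Ec \<subseteq> E\<close>
    unfolding xstar_def by (simp add: Int_absorb1)
  then have feasible: "feasible E B xstar"
    using \<open>0 < ?N\<close> assms(2) unfolding feasible_def xstar_def by simp
  have "B / ?N \<le> ?w xstar"
    using finite_paths[OF assms(1)] assms(4) edge_cut_uniform_path_weight[OF cut] assms(2)
    unfolding xstar_def by simp
  moreover have "?w x \<le> B / ?N" if "feasible E B x" for x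
    using feasible_min_path_weight_bound[OF assms(1,4,5) that] \<open>0 < ?N\<close>
    by (simp add: field_simps)
  ultimately have "?w x \<le> ?w xstar" if "feasible E B x" for x
    using that by (meson order_trans)
  then have "true_cost E s t L xstar \<le> true_cost E s t L x" if "feasible E B x" for x
    using that assms(3) unfolding true_cost_eq_exp_min_path_weight[OF assms(1,4)]
    by (simp add: mult_left_mono)
  with feasible show ?thesis
    by blast
qed

end
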